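(* Let $\mathcal{A}\subset[\mathbb{N}]^{<\infty}$ be nonempty and hereditary, let $P\subset\mathbb{N}$ be infinite and assume $\alpha_0=\mathbb{I}(\mathcal{A},P)<\omega_1$. Then there are an approximating family $(B_n(\alpha))_{n\in\mathbb{N},\alpha\text{ countable limit}}$, defining a transfinite family $(\mathcal{G}_\alpha)_{\alpha<\omega_1}$, and an infinite $L\subset P$ such that $$\mathcal{G}_{\alpha_0}^L\subset\mathcal{A}\cap[L]^{<\infty}\subset\mathcal{G}_{\alpha_0}\cap[L]^{<\infty}.$$
   Context: An approximating family assigns to each countable limit ordinal $\alpha$ finite sets $B_n(\alpha)\subset[0,\alpha)$, $n\in\mathbb{N}$, with $B_n(\alpha)\subset B_{n+1}(\alpha)$ and $\lim_n\max B_n(\alpha)=\alpha$. The transfinite family it defines: $\mathcal{G}_0=\{\emptyset\}$; $\mathcal{G}_{\beta+1}=\{\{n\}\cup E:n\in\mathbb{N},E\in\mathcal{G}_\beta\}\cup\{\emptyset\}$; for limit $\alpha$, $\mathcal{G}_\alpha=\{\emptyset\}\cup\{E\ne\emptyset:E\in\bigcup_{\beta\in B_{\min E}(\alpha)}\mathcal{G}_\beta\}$. For $L=\{l_1<l_2<\dots\}$, $\mathcal{G}^L=\{\{l_i:i\in E\}:E\in\mathcal{G}\}$. Fix any transfinite family $(\mathcal{F}_\alpha)$; a hereditary $\mathcal{A}$ is $\alpha$-large on an infinite $P$ if every infinite $M\subset P$ contains an infinite $N$ with $\mathcal{F}_\alpha^N\subset\mathcal{A}$ (this is independent of the transfinite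 family), and $\mathbb{I}(\mathcal{A},P)=\sup\{\alpha<\omega_1:\mathcal{A}\text{ is }\alpha\text{-large on }P\}$. Hereditary = closed under subsets; $[L]^{<\infty}$ = finite subsets of $L$. *)

theory Defs
  imports Main "HOL-Library.Countable_Set"
begin

text \<open>Countable ordinals are modelled by a well-ordered type 'a that is
uncountable but all of whose proper initial segments are countable (i.e. a copy
of omega_1). Natural numbers start at 0 here; L is enumerated by enumerate L.\<close>

definition ozero :: "'a::wellorder" where
  "ozero = (LEAST x. True)"

definition is_succ_of :: "'a::wellorder \<Rightarrow> 'a \<Rightarrow> bool" where
  "is_succ_of \<alpha> \<beta> \<longleftrightarrow> \<beta> < \<alpha> \<and> (\<forall>\<gamma>. \<beta> < \<gamma> \<longrightarrow> \<alpha> \<le> \<gamma>)"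

definition is_limit :: "'a::wellorder \<Rightarrow> bool" where
  "is_limit \<alpha> \<longleftrightarrow> \<alpha> \<noteq> ozero \<and> \<not> (\<exists>\<beta>. is_succ_of \<alpha> \<beta>)"

definition approx_family :: "('a::wellorder \<Rightarrow> nat \<Rightarrow> 'a set) \<Rightarrow> bool" where
  "approx_family B \<longleftrightarrow>
     (\<forall>\<alpha>. is_limit \<alpha> \<longrightarrow>
        (\<forall>n. finite (B \<alpha> n) \<and> B \<alpha> n \<subseteq> {..<\<alpha>} \<and> B \<alpha> n \<subseteq> B \<alpha> (Suc n)) \<and>
        (\<forall>\<beta><\<alpha>. \<exists>N. \<forall>n\<ge>N. B \<alpha> n \<noteq> {} \<and> \<beta> \<le> Max (B \<alpha> n)))"

definition Gstep :: "('a::wellorder \<Rightarrow> nat \<Rightarrow> 'a set) \<Rightarrow> ('a \<Rightarrow> nat set set) \<Rightarrow> 'a \<Rightarrow> nat set set" where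
  "Gstep B f \<alpha> =
     (if \<alpha> = ozero then {{}}
      else if (\<exists>\<beta>. is_succ_of \<alpha> \<beta>)
        then {insert n E | n E. E \<in> f (THE \<beta>. is_succ_of \<alpha> \<beta>)} \<union> {{}}
      else {{}} \<union> {E. E \<noteq> {} \<and> (\<exists>\<beta>\<in>B \<alpha> (Min E). E \<in> f \<beta>)})"

definition G :: "('a::wellorder \<Rightarrow> nat \<Rightarrow> 'a set) \<Rightarrow> 'a \<Rightarrow> nat set set" where
  "G B = wfrec {(x, y). x < y} (Gstep B)"

text \<open>F^L = {{l_i : i in E} : E in F}, l_0 < l_1 < ... enumerating L.\<close>
definition spread :: "nat set \<Rightarrow> nat set set \<Rightarrow> nat set set" where
  "spread L F = (\<lambda>E. enumerate L ` E) ` F"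

definition hereditary :: "nat set set \<Rightarrow> bool" where
  "hereditary A \<longleftrightarrow> (\<forall>E\<in>A. \<forall>F. F \<subseteq> E \<longrightarrow> F \<in> A)"

definition large :: "('a::wellorder \<Rightarrow> nat \<Rightarrow> 'a set) \<Rightarrow> nat set set \<Rightarrow> nat set \<Rightarrow> 'a \<Rightarrow> bool" where
  "large B0 A P \<alpha> \<longleftrightarrow>
     (\<forall>M. M \<subseteq> P \<and> infinite M \<longrightarrow> (\<exists>N. N \<subseteq> M \<and> infinite N \<and> spread N (G B0 \<alpha>) \<subseteq> A))"

definition index :: "('a::wellorder \<Rightarrow> nat \<Rightarrow> 'a set) \<Rightarrow> nat set set \<Rightarrow> nat set \<Rightarrow> 'a" where
  "index B0 A P = (LEAST b. \<forall>\<alpha>. large B0 A P \<alpha> \<longrightarrow> \<alpha> \<le> b)"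

end

theory Submission
  imports Defs
begin

text \<open>
  Largeness is compared with a rank.

  Spreads of \<open>G\<^sub>\<alpha>\<close> have rank at least \<open>\<alpha>\<close>, so \<open>A\<close> has rank at least
  \<open>\<alpha>\<^sub>0 = I(A,P)\<close> on \<open>P\<close>. Conversely, a Ramsey-type diagonal fusion shows that rank at
  least \<open>\<alpha>\<close> on \<open>M\<close> makes \<open>A\<close> \<open>\<alpha>\<close>-large on \<open>M\<close>, for every approximating family.
  Since \<open>A\<close> is not \<open>(\<alpha>\<^sub>0+1)\<close>-large, some infinite \<open>L\<^sub>0 \<subseteq> P\<close> carries a subfamily
  \<open>F = A \<inter> [L\<^sub>0]\<^sup><\<^sup>\<infinity>\<close> of rank at most \<open>\<alpha>\<^sub>0\<close>. Building \<open>B\<^sub>n(\<lambda>)\<close> from the successors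
  of the ranks of the tail families \<open>F\<^sub>t = {E. t < E, t \<union> E \<in> F}\<close>, \<open>t \<subseteq> {0..n}\<close>, puts
  \<open>F\<close> inside \<open>G\<^sub>\<alpha>\<^sub>0\<close>; the Ramsey step for this \<open>B\<close> inside \<open>L\<^sub>0\<close> then yields \<open>L\<close>.
\<close>

section \<open>Successors and limits\<close>

lemma ozero_le [simp]: "ozero \<le> (x::'a::wellorder)"
  unfolding ozero_def by (rule Least_le) simp

lemma not_less_ozero [simp]: "\<not> x < (ozero::'a::wellorder)"
  by (simp add: not_less)

definition osucc :: "'a::wellorder \<Rightarrow> 'a" where
  "osucc x = (LEAST y. x < y)"

lemma is_succ_of_osucc: "x < (y::'a::wellorder) \<Longrightarrow> is_succ_of (osucc x) x"
  unfolding is_succ_of_def osucc_def by (metis LeastI Least_le)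

lemma is_succ_of_less: "is_succ_of (a::'a::wellorder) b \<Longrightarrow> b < a"
  unfolding is_succ_of_def by simp

lemma less_is_succ_of_iff: "is_succ_of (a::'a::wellorder) b \<Longrightarrow> g < a \<longleftrightarrow> g \<le> b"
  unfolding is_succ_of_def by (meson le_less_trans not_le)

lemma the_is_succ_of:
  assumes "is_succ_of (a::'a::wellorder) b"
  shows "(THE c. is_succ_of a c) = b"
proof (rule the_equality)
  show "c = b" if "is_succ_of a c" for c
    using assms that unfolding is_succ_of_def by (meson leD linorder_neqE)
qed (rule assms)

lemma is_succ_of_not_ozero: "is_succ_of (a::'a::wellorder) b \<Longrightarrow> a \<noteq> ozero"
  unfolding is_succ_of_def using leD ozero_le by blast

lemma osucc_less_limit:
  assumes "is_limit l" "r < (l::'a::wellorder)"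
  shows "osucc r < l"
proof -
  have succ: "is_succ_of (osucc r) r" using is_succ_of_osucc assms(2) .
  then have "osucc r \<le> l" using assms(2) unfolding is_succ_of_def by simp
  moreover have "osucc r \<noteq> l" using succ assms(1) unfolding is_limit_def by auto
  ultimately show ?thesis by simp
qed

lemma ordinal_cases:
  obtains (zero) "(a::'a::wellorder) = ozero" | (succ) b where "is_succ_of a b" | (limit) "is_limit a"
  unfolding is_limit_def by blast

lemma no_greatest_if_omega1:
  assumes "\<not> countable (UNIV :: 'a::wellorder set)" "\<forall>\<alpha>::'a. countable {..<\<alpha>}"
  shows "\<exists>y. (x::'a) < y"
proof (rule ccontr)
  assume "\<nexists>y. x < y"
  then have "UNIV \<subseteq> insert x {..<x}" by (auto simp: not_less_iff_gr_or_eq)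
  moreover have "countable (insert x {..<x})" using assms(2) by simp
  ultimately show False using assms(1) countable_subset by blast
qed

section \<open>The transfinite family\<close>

lemma G_unfold: "G B \<alpha> = Gstep B (cut (G B) {(x, y). x < y} \<alpha>) \<alpha>"
  unfolding G_def by (rule wfrec) (rule wf)

lemma G_ozero: "G B ozero = {{}}"
  by (subst G_unfold) (simp add: Gstep_def)

lemma G_succ: "is_succ_of a b \<Longrightarrow> G B a = {insert n E |n E. E \<in> G B b} \<union> {{}}"
  by (subst G_unfold)
    (simp add: Gstep_def cut_apply is_succ_of_not_ozero the_is_succ_of is_succ_of_less, blast)

lemma approx_family_less: "approx_family B \<Longrightarrow> is_limit a \<Longrightarrow> \<beta> \<in> B a n \<Longrightarrow> \<beta> < a"
  unfolding approx_family_def by blast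

lemma approx_family_finite: "approx_family B \<Longrightarrow> is_limit a \<Longrightarrow> finite (B a n)"
  unfolding approx_family_def by blast

lemma approx_family_mono:
  assumes "approx_family B" "is_limit a" "m \<le> n"
  shows "B a m \<subseteq> B a n"
  using assms lift_Suc_mono_le[of "B a"] unfolding approx_family_def by blast

lemma G_limit:
  assumes B: "approx_family B" and a: "is_limit a"
  shows "G B a = {{}} \<union> {E. E \<noteq> {} \<and> (\<exists>\<beta>\<in>B a (Min E). E \<in> G B \<beta>)}"
proof -
  have nz: "a \<noteq> ozero" and ns: "\<not> (\<exists>b. is_succ_of a b)" using a unfolding is_limit_def by auto
  have "(\<exists>\<beta>\<in>B a (Min E). E \<in> cut (G B) {(x, y). x < y} a \<beta>) \<longleftrightarrow>
      (\<exists>\<beta>\<in>B a (Min E). E \<in> G B \<beta>)" for E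
    using approx_family_less[OF B a] by (auto simp: cut_apply)
  then show ?thesis
    by (subst G_unfold) (simp only: Gstep_def if_not_P[OF nz] if_not_P[OF ns])
qed

lemma empty_mem_G [simp]: "approx_family B \<Longrightarrow> {} \<in> G B a"
  by (cases a rule: ordinal_cases) (auto simp: G_ozero G_succ G_limit)

lemma G_limitI:
  "approx_family B \<Longrightarrow> is_limit a \<Longrightarrow> \<beta> \<in> B a (Min E) \<Longrightarrow> E \<in> G B \<beta> \<Longrightarrow> E \<in> G B a"
  by (cases "E = {}") (auto simp: G_limit)

lemma G_limitE:
  assumes "approx_family B" "is_limit a" "E \<in> G B a" "E \<noteq> {}"
  obtains \<beta> where "\<beta> \<in> B a (Min E)" "E \<in> G B \<beta>"
  using assms by (auto simp: G_limit)

lemma finite_G: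
  assumes B: "approx_family B"
  shows "E \<in> G B a \<Longrightarrow> finite E"
proof (induction a arbitrary: E rule: less_induct)
  case (less a)
  show ?case
  proof (cases a rule: ordinal_cases)
    case (succ b)
    then show ?thesis using less is_succ_of_less[OF succ] by (auto simp: G_succ)
  next
    case limit
    show ?thesis
    proof (cases "E = {}")
      case False
      with less.prems obtain \<beta> where "\<beta> \<in> B a (Min E)" "E \<in> G B \<beta>" by (rule G_limitE[OF B limit])
      then show ?thesis using less.IH approx_family_less[OF B limit] by blast
    qed simp
  qed (use less.prems in \<open>simp add: G_ozero\<close>)
qed

lemma G_subset_succ: "is_succ_of a b \<Longrightarrow> G B b \<subseteq> G B a"
  by (auto simp: G_succ)

lemma hereditary_G:
  assumes B: "approx_family B"
  shows "hereditary (G B a)"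
  unfolding hereditary_def
proof (induction a rule: less_induct)
  case (less a)
  show ?case
  proof (intro ballI allI impI)
    fix E F assume E: "E \<in> G B a" and FE: "F \<subseteq> E"
    show "F \<in> G B a"
    proof (cases a rule: ordinal_cases)
      case zero
      then show ?thesis using E FE by (auto simp: G_ozero)
    next
      case (succ b)
      note IH = less.IH[OF is_succ_of_less[OF succ]]
      show ?thesis
      proof (cases "E = {}")
        case False
        with E obtain n E' where E': "E = insert n E'" "E' \<in> G B b" by (auto simp: G_succ[OF succ])
        then have "F - {n} \<in> G B b" using IH FE by blast
        then have "insert n (F - {n}) \<in> G B a" "F - {n} \<in> G B a"
          using G_subset_succ[OF succ] unfolding G_succ[OF succ] by blast+
        then show ?thesis by (cases "n \<in> F") (auto simp: insert_absorb)
      qed (use E FE B in simp)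
    next
      case limit
      show ?thesis
      proof (cases "F = {}")
        case False
        then have "E \<noteq> {}" using FE by auto
        with E obtain \<beta> where \<beta>: "\<beta> \<in> B a (Min E)" "E \<in> G B \<beta>" by (rule G_limitE[OF B limit])
        have "Min E \<le> Min F"
          using finite_G[OF B E] FE False by (simp add: Min_antimono)
        then have "\<beta> \<in> B a (Min F)" using approx_family_mono[OF B limit] \<beta>(1) by blast
        moreover have "F \<in> G B \<beta>" using less.IH approx_family_less[OF B limit \<beta>(1)] \<beta>(2) FE by blast
        ultimately show ?thesis by (rule G_limitI[OF B limit])
      qed (simp add: B)
    qed
  qed
qed

lemma G_image_increasing:
  assumes B: "approx_family B"
  shows "E \<in> G B a \<Longrightarrow> (\<And>j. j \<in> E \<Longrightarrow> j \<le> f j) \<Longrightarrow> f ` E \<in> G B a"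
proof (induction a arbitrary: E rule: less_induct)
  case (less a)
  show ?case
  proof (cases a rule: ordinal_cases)
    case zero
    then show ?thesis using less.prems by (auto simp: G_ozero)
  next
    case (succ b)
    show ?thesis
    proof (cases "E = {}")
      case False
      with less.prems obtain n E' where "E = insert n E'" "E' \<in> G B b"
        by (auto simp: G_succ[OF succ])
      moreover have "f ` E' \<in> G B b"
        using less.IH[OF is_succ_of_less[OF succ] \<open>E' \<in> G B b\<close>] less.prems(2) \<open>E = insert n E'\<close> by blast
      ultimately show ?thesis unfolding G_succ[OF succ] by blast
    qed (simp add: B)
  next
    case limit
    show ?thesis
    proof (cases "E = {}")
      case False
      with less.prems obtain \<beta> where \<beta>: "\<beta> \<in> B a (Min E)" "E \<in> G B \<beta>"
        by (auto elim: G_limitE[OF B limit])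
      have fin: "finite E" using finite_G[OF B less.prems(1)] .
      have "Min E \<le> Min (f ` E)"
        using fin False less.prems(2) by (auto simp: Min_le_iff intro: order_trans)
      then have "\<beta> \<in> B a (Min (f ` E))" using approx_family_mono[OF B limit] \<beta>(1) by blast
      moreover have "f ` E \<in> G B \<beta>"
        using less.IH[OF approx_family_less[OF B limit \<beta>(1)] \<beta>(2)] less.prems(2) .
      ultimately show ?thesis by (rule G_limitI[OF B limit])
    qed (simp add: B)
  qed
qed

lemma G_succ_Diff_Min:
  assumes B: "approx_family B" and s: "is_succ_of a b" and E: "E \<in> G B a" "E \<noteq> {}"
  shows "E - {Min E} \<in> G B b"
proof -
  obtain n E' where E': "E = insert n E'" "E' \<in> G B b" using E by (auto simp: G_succ[OF s])
  show ?thesis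
  proof (cases "Min E = n")
    case True
    then have "E - {Min E} \<subseteq> E'" using E'(1) by blast
    then show ?thesis using hereditary_G[OF B] E'(2) unfolding hereditary_def by blast
  next
    case False
    have fin: "finite E" using finite_G[OF B E(1)] .
    have m: "Min E \<in> E'" using Min_in[OF fin E(2)] E'(1) False by simp
    have "Min E \<le> n" using Min_le[OF fin] E'(1) by simp
    then have "(\<lambda>j. if j = Min E then n else j) ` E' \<in> G B b"
      by (intro G_image_increasing[OF B E'(2)]) simp
    moreover have "(\<lambda>j. if j = Min E then n else j) ` E' = insert n (E' - {Min E})"
      using m by (auto simp: image_iff)
    moreover have "insert n (E' - {Min E}) = E - {Min E}" using E'(1) False by blast
    ultimately show ?thesis by simp
  qed
qed

text \<open>The only place where \<open>lim\<^sub>n max B\<^sub>n(\<alpha>) = \<alpha>\<close> is used.\<close>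

lemma G_almost_mono:
  assumes B: "approx_family B"
  shows "\<gamma> < \<delta> \<Longrightarrow> \<exists>n0. \<forall>E\<in>G B \<gamma>. (\<forall>x\<in>E. n0 \<le> x) \<longrightarrow> E \<in> G B \<delta>"
proof (induction \<delta> rule: less_induct)
  case (less \<delta>)
  show ?case
  proof (cases \<delta> rule: ordinal_cases)
    case zero
    then show ?thesis using less.prems by simp
  next
    case (succ b)
    then have "\<gamma> \<le> b" using less.prems less_is_succ_of_iff by blast
    then have "\<exists>n0. \<forall>E\<in>G B \<gamma>. (\<forall>x\<in>E. n0 \<le> x) \<longrightarrow> E \<in> G B b"
      using less.IH[OF is_succ_of_less[OF succ]] by (cases "\<gamma> = b") auto
    then show ?thesis using G_subset_succ[OF succ] by blast
  next
    case limit
    obtain N where N: "B \<delta> N \<noteq> {}" "\<gamma> \<le> Max (B \<delta> N)"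
      using B limit less.prems unfolding approx_family_def by blast
    define \<eta> where "\<eta> = Max (B \<delta> N)"
    have \<eta>: "\<eta> \<in> B \<delta> N" "\<gamma> \<le> \<eta>"
      using N approx_family_finite[OF B limit] unfolding \<eta>_def by auto
    obtain n1 where n1: "\<forall>E\<in>G B \<gamma>. (\<forall>x\<in>E. n1 \<le> x) \<longrightarrow> E \<in> G B \<eta>"
    proof (cases "\<gamma> = \<eta>")
      case False
      then show ?thesis using that less.IH[OF approx_family_less[OF B limit \<eta>(1)]] \<eta>(2) by force
    qed (use that in blast)
    have "E \<in> G B \<delta>" if E: "E \<in> G B \<gamma>" "\<forall>x\<in>E. max N n1 \<le> x" for E
    proof (cases "E = {}")
      case False
      then have "N \<le> Min E" using E finite_G[OF B E(1)] by simp
      then have "\<eta> \<in> B \<delta> (Min E)" using approx_family_mono[OF B limit] \<eta>(1) by blast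
      moreover have "E \<in> G B \<eta>" using n1 E by auto
      ultimately show ?thesis by (rule G_limitI[OF B limit])
    qed (simp add: B)
    then show ?thesis by blast
  qed
qed

section \<open>Spreads and diagonal fusion\<close>

lemma enumerate_range_strict_mono:
  assumes f: "strict_mono (f::nat \<Rightarrow> nat)"
  shows "enumerate (range f) = f"
proof
  fix n
  have inf: "infinite (range f)"
    using f strict_mono_imp_inj_on range_inj_infinite by blast
  show "enumerate (range f) n = f n"
  proof (induction n)
    case 0
    show ?case unfolding enumerate_0
      by (rule Least_equality) (auto simp: strict_mono_less_eq[OF f])
  next
    case (Suc n)
    show ?case unfolding enumerate_Suc''[OF inf] Suc
    proof (rule Least_equality)
      fix x assume "x \<in> range f \<and> f n < x"
      then show "f (Suc n) \<le> x" by (auto simp: strict_mono_less[OF f] strict_mono_less_eq[OF f])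
    qed (simp add: strict_monoD[OF f])
  qed
qed

lemma spread_range: "strict_mono f \<Longrightarrow> spread (range f) F = (\<lambda>E. f ` E) ` F"
  unfolding spread_def by (simp add: enumerate_range_strict_mono)

lemma spread_subset_Pow: "infinite S \<Longrightarrow> spread S F \<subseteq> Pow S"
  unfolding spread_def using enumerate_in_set by blast

lemma enumerate_le_enumerate_subset:
  assumes "infinite (S'::nat set)" "S' \<subseteq> S"
  shows "enumerate S j \<le> enumerate S' j"
proof (induction j)
  case 0
  show ?case using assms enumerate_in_set[OF assms(1), of 0] by (auto simp: enumerate_0 intro: Least_le)
next
  case (Suc j)
  have S: "infinite S" using assms finite_subset by blast
  have "enumerate S' (Suc j) \<in> S \<and> enumerate S j < enumerate S' (Suc j)"
    using enumerate_in_set[OF assms(1)] assms(2) Suc enumerate_step[OF assms(1), of j] by auto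
  then show ?case unfolding enumerate_Suc''[OF S] by (rule Least_le)
qed

text \<open>\<open>y ` E\<close> is the \<open>S\<close>-spread of a set lying pointwise above \<open>E\<close>.\<close>

lemma image_mem_spread_G:
  assumes B: "approx_family B" and S: "infinite S" and E: "E \<in> G B a"
    and y: "\<And>j. j \<in> E \<Longrightarrow> y j \<in> S \<and> enumerate S j \<le> y j"
  shows "y ` E \<in> spread S (G B a)"
proof -
  define p where "p j = (SOME i. enumerate S i = y j)" for j
  have p: "enumerate S (p j) = y j" if "j \<in> E" for j
  proof -
    have "\<exists>i. enumerate S i = y j" using enumerate_Ex[OF S] y[OF that] by blast
    then show ?thesis unfolding p_def by (rule someI_ex)
  qed
  have "j \<le> p j" if "j \<in> E" for j
  proof -
    have "enumerate S j \<le> enumerate S (p j)" using y[OF that] p[OF that] by simp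
    then show ?thesis using S by simp
  qed
  then have "p ` E \<in> G B a" by (rule G_image_increasing[OF B E])
  moreover have "enumerate S ` p ` E = y ` E"
    using p by (auto simp: image_image intro!: image_cong)
  ultimately show ?thesis unfolding spread_def by (metis image_eqI)
qed

lemma spread_G_mono:
  assumes B: "approx_family B" and S': "infinite S'" "S' \<subseteq> S"
  shows "spread S' (G B a) \<subseteq> spread S (G B a)"
proof
  fix X assume "X \<in> spread S' (G B a)"
  then obtain E where E: "E \<in> G B a" "X = enumerate S' ` E" unfolding spread_def by auto
  have "infinite S" using S' finite_subset by blast
  then show "X \<in> spread S (G B a)"
    using image_mem_spread_G[OF B _ E(1)] E(2) enumerate_in_set[OF S'(1)] S'(2)
      enumerate_le_enumerate_subset[OF S'] by blast
qed

lemma infinite_greater_in: "infinite (S::nat set) \<Longrightarrow> infinite {z\<in>S. y < z}"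
proof -
  assume "infinite S"
  then have "infinite (S - {..y})" by (simp add: Diff_infinite_finite)
  moreover have "S - {..y} = {z\<in>S. y < z}" by auto
  ultimately show ?thesis by simp
qed

text \<open>Diagonal fusion: \<open>y k\<close> is the \<open>k\<close>-th point of \<open>S k\<close>, and \<open>S (Suc k)\<close> is chosen
  inside the part of \<open>S k\<close> above \<open>y k\<close>.\<close>

lemma fusion:
  fixes \<Phi> :: "nat \<Rightarrow> nat \<Rightarrow> nat set \<Rightarrow> bool"
  assumes S0: "infinite S0"
    and step: "\<And>k y T. y \<in> S0 \<Longrightarrow> infinite T \<Longrightarrow> T \<subseteq> {z\<in>S0. y < z} \<Longrightarrow>
                 \<exists>S'\<subseteq>T. infinite S' \<and> \<Phi> k y S'"
  obtains S y where "S 0 = S0" "\<And>k. infinite (S k)" "strict_mono y"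
    "\<And>k j. k \<le> j \<Longrightarrow> y j \<in> S k \<and> enumerate (S k) j \<le> y j"
    "\<And>k. \<Phi> k (y k) (S (Suc k))"
proof -
  define shrink where "shrink k T =
    (SOME S'. S' \<subseteq> {z\<in>T. enumerate T k < z} \<and> infinite S' \<and> \<Phi> k (enumerate T k) S')" for k T
  have shrink: "shrink k T \<subseteq> {z\<in>T. enumerate T k < z} \<and> infinite (shrink k T) \<and>
      \<Phi> k (enumerate T k) (shrink k T)" if T: "infinite T" "T \<subseteq> S0" for k T
  proof -
    have "\<exists>S'\<subseteq>{z\<in>T. enumerate T k < z}. infinite S' \<and> \<Phi> k (enumerate T k) S'"
    proof (rule step)
      show "enumerate T k \<in> S0" using enumerate_in_set[OF T(1)] T(2) by blast
      show "{z\<in>T. enumerate T k < z} \<subseteq> {z\<in>S0. enumerate T k < z}" using T(2) by blast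
    qed (rule infinite_greater_in[OF T(1)])
    then show ?thesis unfolding shrink_def by (rule someI_ex)
  qed
  define S where "S = rec_nat S0 shrink"
  define y where "y k = enumerate (S k) k" for k
  have S_Suc: "S (Suc k) = shrink k (S k)" for k unfolding S_def by simp
  have S: "infinite (S k) \<and> S k \<subseteq> S0" for k
  proof (induction k)
    case (Suc k)
    then show ?case using shrink[of "S k" k] unfolding S_Suc by blast
  qed (simp add: S_def S0)
  have S_Suc_sub: "S (Suc k) \<subseteq> {z\<in>S k. y k < z}" for k
    using shrink[of "S k" k] S[of k] unfolding S_Suc y_def by blast
  have S_anti: "S j \<subseteq> S k" if "k \<le> j" for k j
  proof (rule lift_Suc_antimono_le[of S, OF _ that])
    show "S (Suc n) \<subseteq> S n" for n using S_Suc_sub[of n] by blast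
  qed
  have y_in: "y k \<in> S k" for k unfolding y_def using S[of k] enumerate_in_set by blast
  show ?thesis
  proof
    show "S 0 = S0" by (simp add: S_def)
    show "infinite (S k)" for k using S[of k] by blast
    show "strict_mono y"
      unfolding strict_mono_Suc_iff using y_in S_Suc_sub by blast
    show "y j \<in> S k \<and> enumerate (S k) j \<le> y j" if "k \<le> j" for k j
      using S_anti[OF that] y_in[of j] enumerate_le_enumerate_subset[of "S j" "S k" j] S[of j]
      unfolding y_def by blast
    show "\<Phi> k (y k) (S (Suc k))" for k
      using shrink[of "S k" k] S[of k] unfolding S_Suc y_def by blast
  qed
qed

section \<open>Rank\<close>

definition link :: "nat set set \<Rightarrow> nat \<Rightarrow> nat set set" where
  "link F n = {E. (\<forall>x\<in>E. n < x) \<and> insert n E \<in> F}"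

inductive rank_le :: "nat set set \<Rightarrow> 'a::wellorder \<Rightarrow> bool" where
  "(\<forall>n. {n} \<in> F \<longrightarrow> (\<exists>\<gamma><\<beta>. rank_le (link F n) \<gamma>)) \<Longrightarrow> rank_le F \<beta>"

lemma rank_le_iff: "rank_le F \<beta> \<longleftrightarrow> (\<forall>n. {n} \<in> F \<longrightarrow> (\<exists>\<gamma><\<beta>. rank_le (link F n) \<gamma>))"
  by (subst rank_le.simps) blast

lemma link_mono: "F' \<subseteq> F \<Longrightarrow> link F' n \<subseteq> link F n"
  unfolding link_def by auto

lemma link_Int_Pow_subset: "link (A \<inter> Pow R) n \<subseteq> link A n \<inter> Pow {z\<in>R. n < z}"
  unfolding link_def by auto

lemma hereditary_link: "hereditary A \<Longrightarrow> hereditary (link A y)"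
  unfolding hereditary_def link_def by (auto dest: insert_mono)

lemma rank_le_antimono: "rank_le F \<beta> \<Longrightarrow> F' \<subseteq> F \<Longrightarrow> rank_le F' \<beta>"
proof (induction arbitrary: F' rule: rank_le.induct)
  case (1 F \<beta>)
  show ?case
  proof (rule rank_le.intros, intro allI impI)
    fix n assume "{n} \<in> F'"
    then obtain \<gamma> where "\<gamma> < \<beta>" "\<forall>F''. F'' \<subseteq> link F n \<longrightarrow> rank_le F'' \<gamma>"
      using 1 by blast
    then show "\<exists>\<gamma><\<beta>. rank_le (link F' n) \<gamma>" using link_mono[OF "1.prems"] by blast
  qed
qed

lemma rank_le_mono: "rank_le F \<beta> \<Longrightarrow> \<beta> \<le> \<beta>' \<Longrightarrow> rank_le F \<beta>'"
  unfolding rank_le_iff[of F] by (meson order.strict_trans2)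

definition rank_ge_on :: "nat set set \<Rightarrow> nat set \<Rightarrow> 'a::wellorder \<Rightarrow> bool" where
  "rank_ge_on A M \<alpha> \<longleftrightarrow> (\<forall>L\<subseteq>M. infinite L \<longrightarrow> (\<forall>\<gamma><\<alpha>. \<not> rank_le (A \<inter> Pow L) \<gamma>))"

lemma rank_ge_on_subset: "rank_ge_on A M \<alpha> \<Longrightarrow> M' \<subseteq> M \<Longrightarrow> rank_ge_on A M' \<alpha>"
  unfolding rank_ge_on_def by blast

lemma rank_ge_on_le: "rank_ge_on A M \<alpha> \<Longrightarrow> \<beta> \<le> \<alpha> \<Longrightarrow> rank_ge_on A M \<beta>"
  unfolding rank_ge_on_def by (meson order.strict_trans2)

lemma spread_G_succ_subset_link:
  assumes B: "approx_family B" and s: "is_succ_of a b" and N: "infinite N"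
  shows "\<exists>N'\<subseteq>N. infinite N' \<and> spread N' (G B b) \<subseteq> link (spread N (G B a)) (enumerate N 0)"
proof -
  have enum: "strict_mono (enumerate N)" using strict_mono_enumerate[OF N] .
  define f where "f j = enumerate N (Suc j)" for j
  have f: "strict_mono f" using enum unfolding f_def strict_mono_def by simp
  have "spread (range f) (G B b) \<subseteq> link (spread N (G B a)) (enumerate N 0)"
  proof
    fix X assume "X \<in> spread (range f) (G B b)"
    then obtain E where E: "E \<in> G B b" "X = f ` E" using spread_range[OF f] by auto
    have "Suc ` E \<in> G B b" by (rule G_image_increasing[OF B E(1)]) simp
    then have "insert 0 (Suc ` E) \<in> G B a" unfolding G_succ[OF s] by blast
    then have "enumerate N ` insert 0 (Suc ` E) \<in> spread N (G B a)"
      unfolding spread_def by (rule imageI)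
    moreover have "enumerate N ` insert 0 (Suc ` E) = insert (enumerate N 0) X"
      using E(2) unfolding f_def by (simp add: image_image)
    ultimately have "insert (enumerate N 0) X \<in> spread N (G B a)" by simp
    moreover have "\<forall>x\<in>X. enumerate N 0 < x"
      using E(2) enum unfolding f_def by (auto simp: strict_mono_def)
    ultimately show "X \<in> link (spread N (G B a)) (enumerate N 0)"
      unfolding link_def by simp
  qed
  moreover have "range f \<subseteq> N" unfolding f_def using enumerate_in_set[OF N] by blast
  moreover have "infinite (range f)" using f strict_mono_imp_inj_on range_inj_infinite by blast
  ultimately show ?thesis by blast
qed

lemma spread_G_less_subset:
  assumes B: "approx_family B" and \<beta>: "\<beta> < a" and N: "infinite N"
  shows "\<exists>N'\<subseteq>N. infinite N' \<and> spread N' (G B \<beta>) \<subseteq> spread N (G B a)"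
proof -
  obtain n0 where n0: "\<forall>E\<in>G B \<beta>. (\<forall>x\<in>E. n0 \<le> x) \<longrightarrow> E \<in> G B a"
    using G_almost_mono[OF B \<beta>] by blast
  define f where "f j = enumerate N (j + n0)" for j
  have f: "strict_mono f" using strict_mono_enumerate[OF N] unfolding f_def strict_mono_def by simp
  have "spread (range f) (G B \<beta>) \<subseteq> spread N (G B a)"
  proof
    fix X assume "X \<in> spread (range f) (G B \<beta>)"
    then obtain E where E: "E \<in> G B \<beta>" "X = f ` E" using spread_range[OF f] by auto
    have "(\<lambda>j. j + n0) ` E \<in> G B \<beta>" by (rule G_image_increasing[OF B E(1)]) simp
    then have "(\<lambda>j. j + n0) ` E \<in> G B a" using n0 by simp
    moreover have "X = enumerate N ` (\<lambda>j. j + n0) ` E"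
      using E(2) unfolding f_def by (auto simp: image_image)
    ultimately show "X \<in> spread N (G B a)" unfolding spread_def by blast
  qed
  moreover have "range f \<subseteq> N" unfolding f_def using enumerate_in_set[OF N] by blast
  moreover have "infinite (range f)" using f strict_mono_imp_inj_on range_inj_infinite by blast
  ultimately show ?thesis by blast
qed

lemma rank_le_spread_G_imp_le:
  assumes B: "approx_family B"
  shows "infinite N \<Longrightarrow> rank_le (spread N (G B \<alpha>)) \<gamma> \<Longrightarrow> \<alpha> \<le> \<gamma>"
proof (induction \<alpha> arbitrary: N \<gamma> rule: less_induct)
  case (less a)
  show ?case
  proof (cases a rule: ordinal_cases)
    case zero
    then show ?thesis by simp
  next
    case (succ b)
    have "{0} \<in> G B a" using empty_mem_G[OF B] unfolding G_succ[OF succ] by blast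
    then have "{enumerate N 0} \<in> spread N (G B a)"
      unfolding spread_def by (simp add: rev_image_eqI)
    then obtain \<gamma>' where \<gamma>': "\<gamma>' < \<gamma>" "rank_le (link (spread N (G B a)) (enumerate N 0)) \<gamma>'"
      using less.prems(2) rank_le_iff by blast
    obtain N' where "N' \<subseteq> N" "infinite N'"
        "spread N' (G B b) \<subseteq> link (spread N (G B a)) (enumerate N 0)"
      using spread_G_succ_subset_link[OF B succ less.prems(1)] by blast
    then have "b \<le> \<gamma>'"
      using less.IH[OF is_succ_of_less[OF succ]] rank_le_antimono[OF \<gamma>'(2)] by blast
    then show ?thesis using \<gamma>'(1) succ unfolding is_succ_of_def by simp
  next
    case limit
    show ?thesis
    proof (rule ccontr)
      assume "\<not> a \<le> \<gamma>"
      then have \<gamma>: "\<gamma> < a" by simp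
      have \<beta>: "osucc \<gamma> < a" "\<gamma> < osucc \<gamma>"
        using osucc_less_limit[OF limit \<gamma>] is_succ_of_less[OF is_succ_of_osucc[OF \<gamma>]] by auto
      obtain N' where "N' \<subseteq> N" "infinite N'" "spread N' (G B (osucc \<gamma>)) \<subseteq> spread N (G B a)"
        using spread_G_less_subset[OF B \<beta>(1) less.prems(1)] by blast
      then have "osucc \<gamma> \<le> \<gamma>" using less.IH[OF \<beta>(1)] rank_le_antimono[OF less.prems(2)] by blast
      then show False using \<beta>(2) by simp
    qed
  qed
qed

lemma large_imp_rank_ge_on:
  assumes B: "approx_family B" and large: "large B A P \<alpha>"
  shows "rank_ge_on A P \<alpha>"
  unfolding rank_ge_on_def
proof (intro allI impI notI)
  fix L and \<gamma> :: 'a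
  assume L: "L \<subseteq> P" "infinite L" and \<gamma>: "\<gamma> < \<alpha>" and rank: "rank_le (A \<inter> Pow L) \<gamma>"
  obtain N where N: "N \<subseteq> L" "infinite N" "spread N (G B \<alpha>) \<subseteq> A"
    using large L unfolding large_def by auto
  then have "spread N (G B \<alpha>) \<subseteq> A \<inter> Pow L" using spread_subset_Pow[OF N(2)] by blast
  then have "rank_le (spread N (G B \<alpha>)) \<gamma>" by (rule rank_le_antimono[OF rank])
  then have "\<alpha> \<le> \<gamma>" by (rule rank_le_spread_G_imp_le[OF B N(2)])
  then show False using \<gamma> by simp
qed

section \<open>Large rank forces largeness\<close>

lemma large_finitely_many:
  assumes B: "approx_family B" and fin: "finite Bs" and large: "\<And>\<beta>. \<beta> \<in> Bs \<Longrightarrow> large B A M \<beta>"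
    and T: "T \<subseteq> M" "infinite T"
  shows "\<exists>N\<subseteq>T. infinite N \<and> (\<forall>\<beta>\<in>Bs. spread N (G B \<beta>) \<subseteq> A)"
  using fin large T
proof (induction Bs arbitrary: T rule: finite_induct)
  case empty
  then show ?case by blast
next
  case (insert \<beta> Bs)
  obtain N1 where N1: "N1 \<subseteq> T" "infinite N1" "\<forall>\<beta>\<in>Bs. spread N1 (G B \<beta>) \<subseteq> A"
    using insert.IH[OF _ insert.prems(2,3)] insert.prems(1) by auto
  have "large B A M \<beta>" using insert.prems(1) by simp
  then obtain N2 where N2: "N2 \<subseteq> N1" "infinite N2" "spread N2 (G B \<beta>) \<subseteq> A"
    using N1(1,2) insert.prems(2) unfolding large_def by (meson order_trans)
  have "\<forall>\<beta>\<in>Bs. spread N2 (G B \<beta>) \<subseteq> A" using N1(3) spread_G_mono[OF B N2(2,1)] by blast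
  then show ?case using N1(1) N2 by blast
qed

lemma spread_G_limit_diagonal_subset:
  assumes B: "approx_family B" and a: "is_limit a" and emp: "{} \<in> A" and y: "strict_mono y"
    and S: "\<And>k. infinite (S k)" "\<And>k j. k \<le> j \<Longrightarrow> y j \<in> S k \<and> enumerate (S k) j \<le> y j"
      "\<And>k \<beta>. \<beta> \<in> B a k \<Longrightarrow> spread (S k) (G B \<beta>) \<subseteq> A"
  shows "spread (range y) (G B a) \<subseteq> A"
proof
  fix Y assume "Y \<in> spread (range y) (G B a)"
  then obtain E where E: "E \<in> G B a" "Y = y ` E" using spread_range[OF y] by auto
  show "Y \<in> A"
  proof (cases "E = {}")
    case False
    then obtain \<beta> where \<beta>: "\<beta> \<in> B a (Min E)" "E \<in> G B \<beta>" using G_limitE[OF B a E(1)] by blast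
    have "y ` E \<in> spread (S (Min E)) (G B \<beta>)"
    proof (rule image_mem_spread_G[OF B S(1) \<beta>(2)])
      show "y j \<in> S (Min E) \<and> enumerate (S (Min E)) j \<le> y j" if "j \<in> E" for j
        using S(2) Min_le[OF finite_G[OF B E(1)] that] by blast
    qed
    then show ?thesis using S(3)[OF \<beta>(1)] E(2) by blast
  qed (use E emp in simp)
qed

lemma spread_G_succ_diagonal_subset:
  assumes B: "approx_family B" and s: "is_succ_of a b" and emp: "{} \<in> A" and y: "strict_mono y"
    and S: "\<And>k. infinite (S k)" "\<And>k j. k \<le> j \<Longrightarrow> y j \<in> S k \<and> enumerate (S k) j \<le> y j"
      "\<And>k. spread (S (Suc k)) (G B b) \<subseteq> link A (y k)"
  shows "spread (range y) (G B a) \<subseteq> A"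
proof
  fix Y assume "Y \<in> spread (range y) (G B a)"
  then obtain E where E: "E \<in> G B a" "Y = y ` E" using spread_range[OF y] by auto
  show "Y \<in> A"
  proof (cases "E = {}")
    case False
    define m where "m = Min E"
    have fin: "finite E" using finite_G[OF B E(1)] .
    have m: "m \<in> E" using Min_in[OF fin False] unfolding m_def .
    have "y ` (E - {m}) \<in> spread (S (Suc m)) (G B b)"
    proof (rule image_mem_spread_G[OF B S(1)])
      show "E - {m} \<in> G B b" unfolding m_def by (rule G_succ_Diff_Min[OF B s E(1) False])
      show "y j \<in> S (Suc m) \<and> enumerate (S (Suc m)) j \<le> y j" if j: "j \<in> E - {m}" for j
      proof (rule S(2))
        show "Suc m \<le> j" using j Min_le[OF fin] unfolding m_def by (simp add: Suc_le_eq order_le_neq_trans)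
      qed
    qed
    then have "insert (y m) (y ` (E - {m})) \<in> A" using S(3)[of m] unfolding link_def by blast
    moreover have "insert (y m) (y ` (E - {m})) = Y" using E(2) m by blast
    ultimately show ?thesis by simp
  qed (use E emp in simp)
qed

lemma large_limit:
  assumes B: "approx_family B" and a: "is_limit a" and emp: "{} \<in> A"
    and large: "\<And>\<beta>. \<beta> < a \<Longrightarrow> large B A M \<beta>"
  shows "large B A M a"
  unfolding large_def
proof (intro allI impI)
  fix T assume T: "T \<subseteq> M \<and> infinite T"
  have refine: "\<exists>N\<subseteq>T'. infinite N \<and> (\<forall>\<beta>\<in>B a n. spread N (G B \<beta>) \<subseteq> A)"
    if "T' \<subseteq> M" "infinite T'" for T' n
  proof (rule large_finitely_many[OF B approx_family_finite[OF B a] _ that])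
    show "large B A M \<beta>" if "\<beta> \<in> B a n" for \<beta>
      using large approx_family_less[OF B a that] by blast
  qed
  obtain S0 where S0: "S0 \<subseteq> T" "infinite S0" "\<forall>\<beta>\<in>B a 0. spread S0 (G B \<beta>) \<subseteq> A"
    using refine[of T 0] T by auto
  obtain S y where S: "S 0 = S0" "\<And>k. infinite (S k)" "strict_mono y"
      "\<And>k j. k \<le> j \<Longrightarrow> y j \<in> S k \<and> enumerate (S k) j \<le> y j"
      "\<And>k. \<forall>\<beta>\<in>B a (Suc k). spread (S (Suc k)) (G B \<beta>) \<subseteq> A"
  proof (rule fusion[OF S0(2), of "\<lambda>k _ (S'::nat set). \<forall>\<beta>\<in>B a (Suc k). spread S' (G B \<beta>) \<subseteq> A"])
    fix k y T' assume T': "infinite T'" "T' \<subseteq> {z\<in>S0. y < z}"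
    then have "T' \<subseteq> M" using S0(1) T by blast
    then show "\<exists>S'\<subseteq>T'. infinite S' \<and> (\<forall>\<beta>\<in>B a (Suc k). spread S' (G B \<beta>) \<subseteq> A)"
      using refine T'(1) by blast
  qed blast
  have S_spread: "spread (S k) (G B \<beta>) \<subseteq> A" if "\<beta> \<in> B a k" for k \<beta>
    using that S0(3) S(1,5) by (cases k) simp_all
  have "spread (range y) (G B a) \<subseteq> A"
    using spread_G_limit_diagonal_subset[OF B a emp S(3,2,4) S_spread] .
  moreover have "range y \<subseteq> T" using S(1,4) S0(1) by blast
  moreover have "infinite (range y)" using S(3) strict_mono_imp_inj_on range_inj_infinite by blast
  ultimately show "\<exists>N. N \<subseteq> T \<and> infinite N \<and> spread N (G B a) \<subseteq> A" by blast
qed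

lemma rank_le_Int_Pow_if_links:
  assumes "\<And>n. n \<in> R \<Longrightarrow> {n} \<in> A \<Longrightarrow> \<exists>\<gamma><b. rank_le (link A n \<inter> Pow {z\<in>R. n < z}) \<gamma>"
  shows "rank_le (A \<inter> Pow R) b"
  unfolding rank_le_iff[of "A \<inter> Pow R"]
proof (intro allI impI)
  fix n assume "{n} \<in> A \<inter> Pow R"
  then obtain \<gamma> where "\<gamma> < b" "rank_le (link A n \<inter> Pow {z\<in>R. n < z}) \<gamma>" using assms by blast
  then show "\<exists>\<gamma><b. rank_le (link (A \<inter> Pow R) n) \<gamma>"
    using rank_le_antimono[OF _ link_Int_Pow_subset] by blast
qed

lemma link_rank_dichotomy_sequence:
  fixes b :: "'a::wellorder" and M :: "nat set"
  assumes M: "infinite M"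
  obtains y :: "nat \<Rightarrow> nat" where "strict_mono y" "range y \<subseteq> M"
    "\<And>k. rank_ge_on (link A (y k)) {z\<in>range y. y k < z} b \<or>
         (\<exists>\<gamma><b. rank_le (link A (y k) \<inter> Pow {z\<in>range y. y k < z}) \<gamma>)"
proof -
  define low where "low x S' \<longleftrightarrow> (\<exists>\<gamma><b. rank_le (link A x \<inter> Pow S') \<gamma>)" for x S'
  obtain S y where S: "S 0 = M" "strict_mono y" "\<And>k j. k \<le> j \<Longrightarrow> y j \<in> S k"
      "\<And>k. rank_ge_on (link A (y k)) (S (Suc k)) b \<or> low (y k) (S (Suc k))"
  proof (rule fusion[OF M, of "\<lambda>_ x S'. rank_ge_on (link A x) S' b \<or> low x S'"])
    fix k x and T :: "nat set" assume T: "infinite T"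
    show "\<exists>S'\<subseteq>T. infinite S' \<and> (rank_ge_on (link A x) S' b \<or> low x S')"
    proof (cases "rank_ge_on (link A x) T b")
      case False
      then obtain L where "L \<subseteq> T" "infinite L" "low x L"
        unfolding rank_ge_on_def low_def by blast
      then show ?thesis by blast
    qed (use T in blast)
  qed blast
  have later: "{z\<in>range y. y k < z} \<subseteq> S (Suc k)" for k
  proof
    fix z assume "z \<in> {z\<in>range y. y k < z}"
    then obtain j where "z = y j" "k < j" using strict_mono_less[OF S(2)] by auto
    then show "z \<in> S (Suc k)" using S(3)[of "Suc k" j] by simp
  qed
  show ?thesis
  proof (rule that[OF S(2)])
    show "range y \<subseteq> M" using S(1) S(3)[of 0] by auto
    fix k
    from S(4)[of k] show "rank_ge_on (link A (y k)) {z\<in>range y. y k < z} b \<or>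
        (\<exists>\<gamma><b. rank_le (link A (y k) \<inter> Pow {z\<in>range y. y k < z}) \<gamma>)"
    proof
      assume "rank_ge_on (link A (y k)) (S (Suc k)) b"
      then show ?thesis using rank_ge_on_subset[OF _ later[of k]] by blast
    next
      assume "low (y k) (S (Suc k))"
      then obtain \<gamma> where "\<gamma> < b" "rank_le (link A (y k) \<inter> Pow (S (Suc k))) \<gamma>"
        unfolding low_def by blast
      moreover have "link A (y k) \<inter> Pow {z\<in>range y. y k < z} \<subseteq> link A (y k) \<inter> Pow (S (Suc k))"
        using later[of k] by blast
      ultimately show ?thesis using rank_le_antimono by blast
    qed
  qed
qed

text \<open>Points \<open>x\<close> whose link does not keep rank \<open>b\<close> on any later set are few: infinitely
  many of them would span a subfamily of rank at most \<open>b\<close>.\<close>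

lemma exists_rank_ge_on_links:
  assumes M: "infinite M" and rank: "rank_ge_on A M a" and ba: "b < a"
  shows "\<exists>X\<subseteq>M. infinite X \<and> (\<forall>x\<in>X. {x} \<in> A \<and> rank_ge_on (link A x) {z\<in>X. x < z} b)"
proof -
  obtain y :: "nat \<Rightarrow> nat" where y: "strict_mono y" "range y \<subseteq> M"
    "\<And>k. rank_ge_on (link A (y k)) {z\<in>range y. y k < z} b \<or>
         (\<exists>\<gamma><b. rank_le (link A (y k) \<inter> Pow {z\<in>range y. y k < z}) \<gamma>)"
    using link_rank_dichotomy_sequence[OF M] by blast
  have inj: "inj y" using y(1) strict_mono_imp_inj_on by blast
  define good where "good = {k. {y k} \<in> A \<and> rank_ge_on (link A (y k)) {z\<in>range y. y k < z} b}"
  have "finite (- good)"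
  proof (rule ccontr)
    assume inf: "infinite (- good)"
    define R where "R = y ` (- good)"
    have "R \<subseteq> M" unfolding R_def using y(2) by auto
    moreover have "infinite R" unfolding R_def using inf inj by (simp add: finite_image_iff inj_on_subset)
    moreover have "rank_le (A \<inter> Pow R) b"
    proof (rule rank_le_Int_Pow_if_links)
      fix n assume n: "n \<in> R" "{n} \<in> A"
      then obtain k where k: "n = y k" "k \<notin> good" unfolding R_def by auto
      then obtain \<gamma> where "\<gamma> < b" "rank_le (link A n \<inter> Pow {z\<in>range y. y k < z}) \<gamma>"
        using n(2) y(3)[of k] unfolding good_def by auto
      moreover have "link A n \<inter> Pow {z\<in>R. n < z} \<subseteq> link A n \<inter> Pow {z\<in>range y. y k < z}"
        using k(1) unfolding R_def by blast
      ultimately show "\<exists>\<gamma><b. rank_le (link A n \<inter> Pow {z\<in>R. n < z}) \<gamma>"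
        using rank_le_antimono by blast
    qed
    ultimately show False using rank ba unfolding rank_ge_on_def by blast
  qed
  then have "infinite good" using infinite_UNIV_nat by (metis Compl_partition finite_UnI)
  then have "infinite (y ` good)" using inj by (simp add: finite_image_iff inj_on_subset)
  moreover have "y ` good \<subseteq> M" using y(2) by auto
  moreover have "{x} \<in> A \<and> rank_ge_on (link A x) {z\<in>y ` good. x < z} b" if x: "x \<in> y ` good" for x
  proof -
    obtain k where k: "x = y k" "k \<in> good" using x by blast
    have "{z\<in>y ` good. x < z} \<subseteq> {z\<in>range y. y k < z}" using k(1) by blast
    then show ?thesis using k rank_ge_on_subset unfolding good_def by blast
  qed
  ultimately show ?thesis by blast
qed

lemma large_succ:
  assumes B: "approx_family B" and s: "is_succ_of a b" and her: "hereditary A" and emp: "{} \<in> A"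
    and rank: "rank_ge_on A M a"
    and IH: "\<And>A' M'. hereditary A' \<Longrightarrow> {} \<in> A' \<Longrightarrow> rank_ge_on A' M' b \<Longrightarrow> large B A' M' b"
  shows "large B A M a"
  unfolding large_def
proof (intro allI impI)
  fix T assume T: "T \<subseteq> M \<and> infinite T"
  have "\<exists>X\<subseteq>T. infinite X \<and> (\<forall>x\<in>X. {x} \<in> A \<and> rank_ge_on (link A x) {z\<in>X. x < z} b)"
  proof (rule exists_rank_ge_on_links)
    show "rank_ge_on A T a" using rank_ge_on_subset[OF rank] T by blast
  qed (use T is_succ_of_less[OF s] in auto)
  then obtain X where X: "X \<subseteq> T" "infinite X"
      "\<And>x. x \<in> X \<Longrightarrow> {x} \<in> A \<and> rank_ge_on (link A x) {z\<in>X. x < z} b"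
    by blast
  have link_large: "large B (link A x) {z\<in>X. x < z} b" if x: "x \<in> X" for x
  proof (rule IH[OF hereditary_link[OF her]])
    show "{} \<in> link A x" using X(3)[OF x] unfolding link_def by simp
  qed (use X(3)[OF x] in blast)
  obtain S y where S: "S 0 = X" "\<And>k. infinite (S k)" "strict_mono y"
      "\<And>k j. k \<le> j \<Longrightarrow> y j \<in> S k \<and> enumerate (S k) j \<le> y j"
      "\<And>k. spread (S (Suc k)) (G B b) \<subseteq> link A (y k)"
  proof (rule fusion[OF X(2), of "\<lambda>_ x S'. spread S' (G B b) \<subseteq> link A x"])
    fix k x T' assume "x \<in> X" "infinite T'" "T' \<subseteq> {z\<in>X. x < z}"
    with link_large[of x] show "\<exists>S'\<subseteq>T'. infinite S' \<and> spread S' (G B b) \<subseteq> link A x"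
      unfolding large_def by auto
  qed blast
  have "spread (range y) (G B a) \<subseteq> A"
    by (rule spread_G_succ_diagonal_subset[OF B s emp S(3,2,4,5)])
  moreover have "range y \<subseteq> T" using S(1) S(4)[of 0] X(1) by blast
  moreover have "infinite (range y)" using S(3) strict_mono_imp_inj_on range_inj_infinite by blast
  ultimately show "\<exists>N. N \<subseteq> T \<and> infinite N \<and> spread N (G B a) \<subseteq> A" by blast
qed

lemma large_if_rank_ge_on:
  assumes B: "approx_family B"
  shows "hereditary A \<Longrightarrow> {} \<in> A \<Longrightarrow> rank_ge_on A M \<alpha> \<Longrightarrow> large B A M \<alpha>"
proof (induction \<alpha> arbitrary: A M rule: less_induct)
  case (less a)
  show ?case
  proof (cases a rule: ordinal_cases)
    case zero
    then show ?thesis using less.prems(2) unfolding large_def spread_def by (auto simp: G_ozero)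
  next
    case (succ b)
    show ?thesis by (rule large_succ[OF B succ less.prems less.IH[OF is_succ_of_less[OF succ]]])
  next
    case limit
    show ?thesis
      using large_limit[OF B limit less.prems(2)] less.IH less.prems rank_ge_on_le less_imp_le by blast
  qed
qed

section \<open>An approximating family adapted to a given family\<close>

definition tail_family :: "nat set set \<Rightarrow> nat set \<Rightarrow> nat set set" where
  "tail_family F t = {E. (\<forall>x\<in>E. \<forall>y\<in>t. y < x) \<and> t \<union> E \<in> F}"

definition tail_rank :: "nat set set \<Rightarrow> nat set \<Rightarrow> 'a::wellorder" where
  "tail_rank F t = (LEAST \<gamma>. rank_le (tail_family F t) \<gamma>)"

text \<open>\<open>B\<^sub>n(\<lambda>)\<close> collects the successors of the ranks of all tail families \<open>F\<^sub>t\<close> with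
  \<open>t \<subseteq> {0..n}\<close> that lie below \<open>\<lambda>\<close>, and the first \<open>n + 1\<close> terms of an enumeration of
  \<open>\<lambda>\<close>; the latter make \<open>max B\<^sub>n(\<lambda>)\<close> tend to \<open>\<lambda>\<close>.\<close>

definition rank_approx :: "nat set set \<Rightarrow> 'a::wellorder \<Rightarrow> nat \<Rightarrow> 'a set" where
  "rank_approx F l n =
    (if is_limit l
     then (\<lambda>t. osucc (tail_rank F t)) ` Pow {..n} \<inter> {..<l} \<union> from_nat_into {..<l} ` {..n}
     else {})"

lemma approx_family_rank_approx:
  assumes seg: "\<forall>\<alpha>::'a::wellorder. countable {..<\<alpha>}"
  shows "approx_family (rank_approx F :: 'a \<Rightarrow> nat \<Rightarrow> 'a set)"
  unfolding approx_family_def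
proof (intro allI impI conjI)
  fix l :: 'a assume l: "is_limit l"
  have "ozero < l" using l ozero_le[of l] unfolding is_limit_def by (auto simp: order_less_le)
  then have ne: "{..<l} \<noteq> {}" by auto
  have fin: "finite (rank_approx F l n)" for n
    unfolding rank_approx_def by simp
  then show "finite (rank_approx F l n)" for n .
  show "rank_approx F l n \<subseteq> {..<l}" for n
    unfolding rank_approx_def if_P[OF l] using from_nat_into[OF ne] by blast
  show "rank_approx F l n \<subseteq> rank_approx F l (Suc n)" for n
  proof -
    have "{..n} \<subseteq> {..Suc n}" by auto
    then have "(\<lambda>t. osucc (tail_rank F t)) ` Pow {..n} \<subseteq> (\<lambda>t. osucc (tail_rank F t)) ` Pow {..Suc n}"
      "from_nat_into {..<l} ` {..n} \<subseteq> from_nat_into {..<l} ` {..Suc n}"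
      by (simp_all add: image_mono Pow_mono)
    then show ?thesis unfolding rank_approx_def if_P[OF l] by blast
  qed
  fix \<beta> assume "\<beta> < l"
  then have "\<beta> \<in> range (from_nat_into {..<l})" using range_from_nat_into[OF ne] seg by simp
  then obtain k where k: "\<beta> = from_nat_into {..<l} k" by blast
  have "\<beta> \<in> rank_approx F l n" if "k \<le> n" for n
  proof -
    have "k \<in> {..n}" using that by simp
    then show ?thesis unfolding rank_approx_def if_P[OF l] k by blast
  qed
  then show "\<exists>N. \<forall>n\<ge>N. rank_approx F l n \<noteq> {} \<and> \<beta> \<le> Max (rank_approx F l n)"
    using Max_ge[OF fin] by blast
qed

lemma osucc_tail_rank_mem_rank_approx:
  assumes "is_limit l" "t \<subseteq> {..n}" "tail_rank F t < l"
  shows "osucc (tail_rank F t) \<in> rank_approx F l n"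
  unfolding rank_approx_def if_P[OF assms(1)] using assms(2) osucc_less_limit[OF assms(1,3)] by blast

lemma tail_family_empty [simp]: "tail_family F {} = F"
  unfolding tail_family_def by simp

lemma tail_family_insert_subset_link:
  "\<forall>y\<in>t. y < n \<Longrightarrow> tail_family F (insert n t) \<subseteq> link (tail_family F t) n"
  unfolding tail_family_def link_def by auto

lemma tail_family_Diff_Min:
  assumes E: "E \<in> tail_family F t" "finite E" "E \<noteq> {}"
  shows "E - {Min E} \<in> tail_family F (insert (Min E) t)"
proof -
  have "Min E \<in> E" using Min_in[OF E(2,3)] .
  then have "insert (Min E) t \<union> (E - {Min E}) = t \<union> E" by blast
  moreover have "Min E < x" if "x \<in> E - {Min E}" for x
    using that Min_le[OF E(2)] by (simp add: order_le_neq_trans)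
  ultimately show ?thesis using E(1) \<open>Min E \<in> E\<close> unfolding tail_family_def by auto
qed

lemma tail_family_link_rank:
  assumes her: "hereditary F" and rank: "rank_le (tail_family F t) \<beta>"
    and E: "E \<in> tail_family F t" "finite E" "E \<noteq> {}"
  shows "\<exists>\<gamma><\<beta>. rank_le (tail_family F (insert (Min E) t)) \<gamma>"
proof -
  define n where "n = Min E"
  have n: "n \<in> E" using Min_in[OF E(2,3)] unfolding n_def .
  have tn: "\<forall>y\<in>t. y < n" using E(1) n unfolding tail_family_def by blast
  have "t \<union> {n} \<subseteq> t \<union> E" using n by blast
  then have "{n} \<in> tail_family F t" using her E(1) tn unfolding tail_family_def hereditary_def by blast
  then obtain \<gamma> where "\<gamma> < \<beta>" "rank_le (link (tail_family F t) n) \<gamma>" using rank rank_le_iff by blast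
  then show ?thesis
    using rank_le_antimono tail_family_insert_subset_link[OF tn] unfolding n_def by blast
qed

lemma tail_family_subset_G:
  assumes seg: "\<forall>\<alpha>::'a::wellorder. countable {..<\<alpha>}"
    and her: "hereditary F" and fin: "\<forall>E\<in>F. finite E"
  shows "rank_le (tail_family F t) (\<beta>::'a) \<Longrightarrow> tail_family F t \<subseteq> G (rank_approx F) \<beta>"
proof (induction \<beta> arbitrary: t rule: less_induct)
  case (less \<beta>)
  have B: "approx_family (rank_approx F :: 'a \<Rightarrow> nat \<Rightarrow> 'a set)"
    using approx_family_rank_approx[OF seg] .
  show ?case
  proof
    fix E assume E: "E \<in> tail_family F t"
    show "E \<in> G (rank_approx F) \<beta>"
    proof (cases "E = {}")
      case False
      define n where "n = Min E"
      define t' where "t' = insert n t"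
      have finE: "finite E" using E fin unfolding tail_family_def by blast
      obtain \<gamma> where \<gamma>: "\<gamma> < \<beta>" "rank_le (tail_family F t') \<gamma>"
        using tail_family_link_rank[OF her less.prems E finE False] unfolding t'_def n_def by blast
      have Em: "E - {n} \<in> tail_family F t'"
        using tail_family_Diff_Min[OF E finE False] unfolding t'_def n_def .
      have E_eq: "E = insert n (E - {n})" using Min_in[OF finE False] unfolding n_def by blast
      show ?thesis
      proof (cases \<beta> rule: ordinal_cases)
        case zero
        then show ?thesis using \<gamma>(1) by simp
      next
        case (succ b)
        have "rank_le (tail_family F t') b"
          using rank_le_mono[OF \<gamma>(2)] \<gamma>(1) less_is_succ_of_iff[OF succ] by blast
        then have "E - {n} \<in> G (rank_approx F) b" using less.IH[OF is_succ_of_less[OF succ]] Em by blast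
        then show ?thesis using E_eq unfolding G_succ[OF succ] by blast
      next
        case limit
        define r where "r = (tail_rank F t' :: 'a)"
        have r: "rank_le (tail_family F t') r" unfolding r_def tail_rank_def using \<gamma>(2) by (rule LeastI)
        have "r \<le> \<gamma>" unfolding r_def tail_rank_def using \<gamma>(2) by (rule Least_le)
        then have r\<beta>: "r < \<beta>" using \<gamma>(1) by simp
        have "E - {n} \<in> G (rank_approx F) r" using less.IH[OF r\<beta> r] Em by blast
        then have "E \<in> G (rank_approx F) (osucc r)"
          using E_eq unfolding G_succ[OF is_succ_of_osucc[OF r\<beta>]] by blast
        moreover have "t' \<subseteq> {..n}"
          using E E_eq unfolding t'_def tail_family_def by (auto intro: less_imp_le)
        then have "osucc r \<in> rank_approx F \<beta> (Min E)"
          using osucc_tail_rank_mem_rank_approx[OF limit] r\<beta> unfolding r_def n_def by blast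
        ultimately show ?thesis by (rule G_limitI[OF B limit, rotated])
      qed
    qed (simp add: B)
  qed
qed

corollary subset_G_rank_approx:
  assumes "\<forall>\<alpha>::'a::wellorder. countable {..<\<alpha>}" "hereditary F" "\<forall>E\<in>F. finite E"
    and "rank_le F (\<beta>::'a)"
  shows "F \<subseteq> G (rank_approx F) \<beta>"
  using tail_family_subset_G[OF assms(1-3), of "{}" \<beta>] assms(4) by simp

section \<open>The index\<close>

lemma large_le_index:
  assumes "\<exists>b. \<forall>\<alpha>. large B0 A P \<alpha> \<longrightarrow> \<alpha> \<le> b" and "large B0 A P \<alpha>"
  shows "\<alpha> \<le> index B0 A P"
  using LeastI_ex[OF assms(1)] assms(2) unfolding index_def by blast

lemma rank_ge_on_index:
  assumes B0: "approx_family B0"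
  shows "rank_ge_on A P (index B0 A P)"
  unfolding rank_ge_on_def
proof (intro allI impI notI)
  fix L and \<gamma> :: 'a
  assume L: "L \<subseteq> P" "infinite L" and \<gamma>: "\<gamma> < index B0 A P" and rank: "rank_le (A \<inter> Pow L) \<gamma>"
  have "\<not> (\<forall>\<alpha>. large B0 A P \<alpha> \<longrightarrow> \<alpha> \<le> \<gamma>)"
  proof
    assume "\<forall>\<alpha>. large B0 A P \<alpha> \<longrightarrow> \<alpha> \<le> \<gamma>"
    then have "index B0 A P \<le> \<gamma>" unfolding index_def by (rule Least_le)
    then show False using \<gamma> by simp
  qed
  then obtain \<alpha> where "large B0 A P \<alpha>" "\<gamma> < \<alpha>" by (auto simp: not_le)
  then have "rank_ge_on A P \<alpha>" "\<gamma> < \<alpha>" using large_imp_rank_ge_on[OF B0] by blast+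
  then show False using L rank unfolding rank_ge_on_def by blast
qed

lemma exists_rank_le_index:
  assumes no_greatest: "\<And>x::'a::wellorder. \<exists>y. x < y" and B0: "approx_family (B0 :: 'a \<Rightarrow> nat \<Rightarrow> 'a set)"
    and her: "hereditary A" and emp: "{} \<in> A"
    and bounded: "\<exists>b. \<forall>\<alpha>. large B0 A P \<alpha> \<longrightarrow> \<alpha> \<le> b"
  shows "\<exists>L\<subseteq>P. infinite L \<and> rank_le (A \<inter> Pow L) (index B0 A P)"
proof -
  define \<alpha>0 where "\<alpha>0 = index B0 A P"
  obtain s where s: "is_succ_of s \<alpha>0" using is_succ_of_osucc no_greatest by blast
  have "\<not> large B0 A P s"
  proof
    assume "large B0 A P s"
    then have "s \<le> \<alpha>0" unfolding \<alpha>0_def by (rule large_le_index[OF bounded])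
    then show False using is_succ_of_less[OF s] by simp
  qed
  then have "\<not> rank_ge_on A P s" using large_if_rank_ge_on[OF B0 her emp] by blast
  then obtain L \<gamma> where L: "L \<subseteq> P" "infinite L" and \<gamma>: "\<gamma> < s" "rank_le (A \<inter> Pow L) \<gamma>"
    unfolding rank_ge_on_def by blast
  have "rank_le (A \<inter> Pow L) \<alpha>0" using rank_le_mono[OF \<gamma>(2)] \<gamma>(1) less_is_succ_of_iff[OF s] by blast
  then show ?thesis using L unfolding \<alpha>0_def by blast
qed

theorem theorem4p1:
  fixes A :: "nat set set" and P :: "nat set"
    and B0 :: "'a::wellorder \<Rightarrow> nat \<Rightarrow> 'a set"
  assumes omega1_uncountable: "\<not> countable (UNIV :: 'a set)"
    and omega1_segments: "\<forall>\<alpha>::'a. countable {..<\<alpha>}"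
    and B0: "approx_family B0"
    and A_nonempty: "A \<noteq> {}"
    and A_hered: "hereditary A"
    and A_finite: "\<forall>E\<in>A. finite E"
    and P_inf: "infinite P"
    and bounded: "\<exists>b::'a. \<forall>\<alpha>. large B0 A P \<alpha> \<longrightarrow> \<alpha> \<le> b"
  shows "\<exists>B L. approx_family B \<and> L \<subseteq> P \<and> infinite L \<and>
           spread L (G B (index B0 A P)) \<subseteq> {E \<in> A. E \<subseteq> L} \<and>
           {E \<in> A. E \<subseteq> L} \<subseteq> {E \<in> G B (index B0 A P). E \<subseteq> L}"
proof -
  define \<alpha>0 where "\<alpha>0 = index B0 A P"
  have emp: "{} \<in> A" using A_nonempty A_hered unfolding hereditary_def by blast
  have "\<exists>L\<subseteq>P. infinite L \<and> rank_le (A \<inter> Pow L) \<alpha>0" unfolding \<alpha>0_def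
    by (rule exists_rank_le_index[OF no_greatest_if_omega1[OF omega1_uncountable omega1_segments]
          B0 A_hered emp bounded])
  then obtain L0 where L0: "L0 \<subseteq> P" "infinite L0" "rank_le (A \<inter> Pow L0) \<alpha>0" by blast
  define F where "F = A \<inter> Pow L0"
  define B where "B = (rank_approx F :: 'a \<Rightarrow> nat \<Rightarrow> 'a set)"
  have B: "approx_family B" unfolding B_def by (rule approx_family_rank_approx[OF omega1_segments])
  have "hereditary F" "\<forall>E\<in>F. finite E" using A_hered A_finite unfolding F_def hereditary_def by blast+
  then have FG: "F \<subseteq> G B \<alpha>0"
    using subset_G_rank_approx[OF omega1_segments] L0(3) unfolding B_def F_def by blast
  have "rank_ge_on A L0 \<alpha>0" using rank_ge_on_subset[OF rank_ge_on_index[OF B0] L0(1)] unfolding \<alpha>0_def .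
  then have "large B A L0 \<alpha>0" by (rule large_if_rank_ge_on[OF B A_hered emp])
  then obtain L where L: "L \<subseteq> L0" "infinite L" "spread L (G B \<alpha>0) \<subseteq> A"
    using L0(2) unfolding large_def by auto
  have "spread L (G B \<alpha>0) \<subseteq> {E \<in> A. E \<subseteq> L}" using L(3) spread_subset_Pow[OF L(2)] by blast
  moreover have "{E \<in> A. E \<subseteq> L} \<subseteq> {E \<in> G B \<alpha>0. E \<subseteq> L}" using FG L(1) unfolding F_def by blast
  moreover have "L \<subseteq> P" using L(1) L0(1) by blast
  ultimately show ?thesis using B L(2) unfolding \<alpha>0_def by blast
qed

end
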